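(* Let $G$ be a bipartite graph with $v$ vertices in each of its two colour classes and with $e$ edges. If the girth of $G$ is at least $8$, then $$e<v^{4/3}+\frac{2}{3}v-\frac{2}{9}v^{2/3}-\frac{20}{81}v^{1/3}.$$ *)

theory Defs
  imports Complex_Main
begin

definition has_cycle_of_length :: "'a set set \<Rightarrow> nat \<Rightarrow> bool" where
  "has_cycle_of_length E k \<longleftrightarrow>
     3 \<le> k \<and> (\<exists>xs. length xs = k \<and> distinct xs \<and>
                  (\<forall>i<k. {xs ! i, xs ! ((i + 1) mod k)} \<in> E))"

definition girth_at_least :: "'a set set \<Rightarrow> nat \<Rightarrow> bool" where
  "girth_at_least E g \<longleftrightarrow> (\<forall>k<g. \<not> has_cycle_of_length E k)"

definition bipartite_graph :: "'a set \<Rightarrow> 'a set \<Rightarrow> 'a set set \<Rightarrow> bool" where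
  "bipartite_graph A B E \<longleftrightarrow> finite A \<and> finite B \<and> A \<inter> B = {} \<and>
     E \<subseteq> {{a, b} | a b. a \<in> A \<and> b \<in> B}"

end

(* Let n = card A + card B, let d = 2e/n be the average degree and F(d) = d (1 + (d - 1)^2).
   The main inequality is F(d) <= n/2.  If every degree is at least 2, each edge ab together with
   a' in N(b) - {a} and b' in N(a) - {b} gives a path a' b a b'.  As there are no cycles of length
   4 or 6, these paths have distinct endpoint pairs, none of which is an edge, so
   e + sum over edges ab of (d(a) - 1)(d(b) - 1) <= card A * card B <= n^2/4.  Jensen's inequality
   for t ln(t - 1) and ln y <= y - 1 bound the sum below by e (d - 1)^2.  Vertices of degree at
   most 1 can be deleted without lowering the average degree as long as e >= n, and for e < n the
   bound is immediate.  For card A = card B = v the inequality says F(e/v) <= v; as F is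
   increasing, it remains to check that F exceeds v at the claimed bound divided by v. *)

theory Submission
  imports Defs "HOL-Analysis.Convex"
begin

definition neighbours :: "'a set set \<Rightarrow> 'a \<Rightarrow> 'a set" where
  "neighbours E x = {w. {x, w} \<in> E}"

definition degree :: "'a set set \<Rightarrow> 'a \<Rightarrow> nat" where
  "degree E x = card (neighbours E x)"

definition edge_pairs :: "'a set \<Rightarrow> 'a set \<Rightarrow> 'a set set \<Rightarrow> ('a \<times> 'a) set" where
  "edge_pairs A B E = {(a, b) \<in> A \<times> B. {a, b} \<in> E}"

lemma successively_nth:
  "successively P xs \<Longrightarrow> Suc i < length xs \<Longrightarrow> P (xs ! i) (xs ! Suc i)"
  by (induction P xs arbitrary: i rule: successively.induct) (auto simp: nth_Cons split: nat.splits)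

lemma has_cycle_of_length_intro:
  assumes "distinct xs" "3 \<le> length xs"
    and "successively (\<lambda>x y. {x, y} \<in> E) xs" "{last xs, hd xs} \<in> E"
  shows "has_cycle_of_length E (length xs)"
  unfolding has_cycle_of_length_def
proof (intro conjI exI allI impI)
  fix i assume i: "i < length xs"
  show "{xs ! i, xs ! ((i + 1) mod length xs)} \<in> E"
  proof (cases "Suc i < length xs")
    case True
    then show ?thesis using successively_nth[OF assms(3)] by simp
  next
    case False
    then have "Suc i = length xs" using i by simp
    then have "i = length xs - 1" "(i + 1) mod length xs = 0" by simp_all
    moreover have "xs \<noteq> []" using i by auto
    ultimately show ?thesis using assms(4) by (simp add: last_conv_nth hd_conv_nth insert_commute)
  qed
qed (use assms in auto)

lemma girth_at_least_no_cycle: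
  assumes "girth_at_least E g" "distinct xs" "3 \<le> length xs" "length xs < g"
    and "successively (\<lambda>x y. {x, y} \<in> E) xs" "{last xs, hd xs} \<in> E"
  shows False
  using has_cycle_of_length_intro[OF assms(2,3,5,6)] assms(1,4) by (auto simp: girth_at_least_def)

lemma girth_at_least_subset: "girth_at_least E g \<Longrightarrow> E' \<subseteq> E \<Longrightarrow> girth_at_least E' g"
  unfolding girth_at_least_def has_cycle_of_length_def by blast

lemma girth_at_least_mono: "girth_at_least E g \<Longrightarrow> g' \<le> g \<Longrightarrow> girth_at_least E g'"
  unfolding girth_at_least_def by simp

lemma bipartite_graph_edgeE:
  assumes "bipartite_graph A B E" "ed \<in> E"
  obtains a b where "a \<in> A" "b \<in> B" "ed = {a, b}"
  using assms unfolding bipartite_graph_def by blast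

lemma bipartite_graph_edge_cases:
  assumes "bipartite_graph A B E" "{x, y} \<in> E"
  shows "x \<in> A \<and> y \<in> B \<or> x \<in> B \<and> y \<in> A"
  using assms by (elim bipartite_graph_edgeE) (auto simp: doubleton_eq_iff)

lemma bipartite_graph_neighbours:
  assumes "bipartite_graph A B E"
  shows "a \<in> A \<Longrightarrow> neighbours E a \<subseteq> B"
    and "b \<in> B \<Longrightarrow> neighbours E b \<subseteq> A"
    and "x \<notin> A \<union> B \<Longrightarrow> neighbours E x = {}"
  using bipartite_graph_edge_cases[OF assms] assms
  unfolding bipartite_graph_def neighbours_def by blast+

lemma bipartite_graph_finite_neighbours:
  assumes "bipartite_graph A B E" shows "finite (neighbours E x)"
proof -
  have "neighbours E x \<subseteq> A \<union> B" using bipartite_graph_neighbours[OF assms] by blast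
  then show ?thesis using assms unfolding bipartite_graph_def by (meson finite_Un finite_subset)
qed

lemma bipartite_graph_edge_pairs:
  assumes "bipartite_graph A B E"
  shows "edge_pairs A B E = Sigma A (neighbours E)"
    and "edge_pairs A B E = (\<lambda>(b, a). (a, b)) ` Sigma B (neighbours E)"
  using bipartite_graph_neighbours(1,2)[OF assms]
  by (force simp: edge_pairs_def neighbours_def insert_commute)+

lemma card_edge_pairs:
  assumes "bipartite_graph A B E" shows "card (edge_pairs A B E) = card E"
proof -
  have "bij_betw (\<lambda>(a, b). {a, b}) (edge_pairs A B E) E"
  proof (rule bij_betw_imageI)
    show "inj_on (\<lambda>(a, b). {a, b}) (edge_pairs A B E)"
      using assms by (auto simp: inj_on_def edge_pairs_def bipartite_graph_def doubleton_eq_iff)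
    show "(\<lambda>(a, b). {a, b}) ` edge_pairs A B E = E"
      using assms by (fastforce simp: edge_pairs_def elim: bipartite_graph_edgeE)
  qed
  then show ?thesis by (rule bij_betw_same_card)
qed

lemma sum_edge_pairs_fst:
  assumes "bipartite_graph A B E"
  shows "(\<Sum>p\<in>edge_pairs A B E. h (fst p)) = (\<Sum>a\<in>A. of_nat (degree E a) * h a)"
proof -
  have "(\<Sum>a\<in>A. of_nat (degree E a) * h a) = (\<Sum>a\<in>A. \<Sum>b\<in>neighbours E a. h a)"
    by (simp add: degree_def)
  also have "\<dots> = (\<Sum>(a, b)\<in>Sigma A (neighbours E). h a)"
    using assms bipartite_graph_finite_neighbours[OF assms] unfolding bipartite_graph_def
    by (intro sum.Sigma) auto
  finally show ?thesis by (simp add: bipartite_graph_edge_pairs(1)[OF assms] case_prod_beta)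
qed

lemma sum_edge_pairs_snd:
  assumes "bipartite_graph A B E"
  shows "(\<Sum>p\<in>edge_pairs A B E. h (snd p)) = (\<Sum>b\<in>B. of_nat (degree E b) * h b)"
proof -
  have "inj_on (\<lambda>(b, a). (a, b)) (Sigma B (neighbours E))" by (auto simp: inj_on_def)
  then have "(\<Sum>p\<in>edge_pairs A B E. h (snd p)) = (\<Sum>(b, a)\<in>Sigma B (neighbours E). h b)"
    unfolding bipartite_graph_edge_pairs(2)[OF assms] by (subst sum.reindex) (auto simp: case_prod_beta)
  also have "\<dots> = (\<Sum>b\<in>B. \<Sum>a\<in>neighbours E b. h b)"
    using assms bipartite_graph_finite_neighbours[OF assms] unfolding bipartite_graph_def
    by (intro sum.Sigma[symmetric]) auto
  also have "\<dots> = (\<Sum>b\<in>B. of_nat (degree E b) * h b)"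
    by (simp add: degree_def)
  finally show ?thesis .
qed

lemma girth_5_path3_not_edge:
  assumes "girth_at_least E 5" "A \<inter> B = {}" "a \<in> A" "a' \<in> A" "b \<in> B" "b' \<in> B"
    and "{a, b} \<in> E" "{b, a'} \<in> E" "{a', b'} \<in> E" "a \<noteq> a'" "b \<noteq> b'"
  shows "{a, b'} \<notin> E"
proof
  assume "{a, b'} \<in> E"
  then show False
    by (intro girth_at_least_no_cycle[OF assms(1), of "[a, b, a', b']"])
       (use assms in \<open>auto simp: insert_commute\<close>)
qed

lemma girth_7_path3_unique:
  assumes "girth_at_least E 7" "A \<inter> B = {}"
    and "a \<in> A" "a1 \<in> A" "a2 \<in> A" "b1 \<in> B" "b2 \<in> B" "b \<in> B"
    and "{a, b1} \<in> E" "{b1, a1} \<in> E" "{a1, b} \<in> E" "a \<noteq> a1" "b1 \<noteq> b"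
    and "{a, b2} \<in> E" "{b2, a2} \<in> E" "{a2, b} \<in> E" "a \<noteq> a2" "b2 \<noteq> b"
  shows "a1 = a2 \<and> b1 = b2"
proof (rule ccontr)
  assume different: "\<not> (a1 = a2 \<and> b1 = b2)"
  have disj: "x \<noteq> y" if "x \<in> A" "y \<in> B" for x y using assms(2) that by auto
  consider "b1 = b2" "a1 \<noteq> a2" | "a1 = a2" "b1 \<noteq> b2" | "a1 \<noteq> a2" "b1 \<noteq> b2"
    using different by blast
  then show False
  proof cases
    case 1
    then show False
      by (intro girth_at_least_no_cycle[OF assms(1), of "[b1, a1, b, a2]"])
         (use assms disj in \<open>auto simp: insert_commute\<close>)
  next
    case 2
    then show False
      by (intro girth_at_least_no_cycle[OF assms(1), of "[a, b1, a1, b2]"])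
         (use assms disj in \<open>auto simp: insert_commute\<close>)
  next
    case 3
    then show False
      by (intro girth_at_least_no_cycle[OF assms(1), of "[a, b1, a1, b, a2, b2]"])
         (use assms disj in \<open>auto simp: insert_commute\<close>)
  qed
qed

text \<open>\<open>((a, b), (a', b'))\<close> encodes the path \<open>a' b a b'\<close> around the middle edge \<open>ab\<close>.\<close>

definition paths3 :: "'a set \<Rightarrow> 'a set \<Rightarrow> 'a set set \<Rightarrow> (('a \<times> 'a) \<times> ('a \<times> 'a)) set" where
  "paths3 A B E = (SIGMA (a, b):edge_pairs A B E. (neighbours E b - {a}) \<times> (neighbours E a - {b}))"

lemma paths3_memD:
  assumes "bipartite_graph A B E" "((a, b), (a', b')) \<in> paths3 A B E"
  shows "a \<in> A \<and> b \<in> B \<and> a' \<in> A \<and> b' \<in> B \<and>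
    {a', b} \<in> E \<and> {b, a} \<in> E \<and> {a, b'} \<in> E \<and> a' \<noteq> a \<and> b \<noteq> b'"
proof -
  have "a \<in> A" "b \<in> B" "{a, b} \<in> E" "a' \<in> neighbours E b" "b' \<in> neighbours E a"
    "a' \<noteq> a" "b' \<noteq> b"
    using assms(2) unfolding paths3_def edge_pairs_def by auto
  moreover have "a' \<in> A" "b' \<in> B"
    using calculation bipartite_graph_neighbours(1,2)[OF assms(1)] by blast+
  ultimately show ?thesis by (auto simp: neighbours_def insert_commute)
qed

lemma card_paths3:
  assumes "bipartite_graph A B E"
  shows "real (card (paths3 A B E)) =
           (\<Sum>(a, b)\<in>edge_pairs A B E. (real (degree E b) - 1) * (real (degree E a) - 1))"
proof -
  have fin_nbr: "finite (neighbours E x)" for x using bipartite_graph_finite_neighbours[OF assms] .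
  have "finite (edge_pairs A B E)"
    unfolding bipartite_graph_edge_pairs(1)[OF assms] using assms fin_nbr
    by (simp add: bipartite_graph_def)
  then have "card (paths3 A B E) =
      (\<Sum>(a, b)\<in>edge_pairs A B E. card (neighbours E b - {a}) * card (neighbours E a - {b}))"
    unfolding paths3_def using fin_nbr by (subst card_SigmaI) (auto simp: case_prod_beta)
  moreover have "real (card (neighbours E y - {x})) = real (degree E y) - 1"
    if "{x, y} \<in> E" for x y
  proof -
    have x: "x \<in> neighbours E y" using that by (simp add: neighbours_def insert_commute)
    then have "0 < card (neighbours E y)" using fin_nbr[of y] by (auto simp: card_gt_0_iff)
    then show ?thesis by (simp add: degree_def card_Diff_singleton[OF x] of_nat_diff)
  qed
  ultimately show ?thesis
    unfolding edge_pairs_def by (auto simp: insert_commute intro!: sum.cong)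
qed

lemma card_edges_plus_paths3_le:
  assumes bip: "bipartite_graph A B E" and girth: "girth_at_least E 7"
  shows "card E + card (paths3 A B E) \<le> card A * card B"
proof -
  define EP P where "EP = edge_pairs A B E" and "P = paths3 A B E"
  have dis: "A \<inter> B = {}" and fin: "finite (A \<times> B)"
    using bip unfolding bipartite_graph_def by auto
  have EP_sub: "EP \<subseteq> A \<times> B" unfolding EP_def edge_pairs_def by auto
  have "inj_on snd P"
  proof (rule inj_onI)
    fix p q assume "p \<in> P" "q \<in> P" "snd p = snd q"
    then obtain a1 b1 a2 b2 a b where "p = ((a1, b1), (a, b))" "q = ((a2, b2), (a, b))"
      by (metis prod.collapse)
    moreover have "a1 = a2 \<and> b1 = b2"
      using paths3_memD[OF bip, of a1 b1 a b] paths3_memD[OF bip, of a2 b2 a b]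
        \<open>p \<in> P\<close> \<open>q \<in> P\<close> calculation
      by (intro girth_7_path3_unique[OF girth dis, of a a1 a2 b1 b2 b]) (simp_all add: P_def)
    ultimately show "p = q" by simp
  qed
  then have "card (snd ` P) = card P" by (rule card_image)
  moreover have "snd ` P \<subseteq> A \<times> B" using paths3_memD[OF bip] by (force simp: P_def)
  moreover have "EP \<inter> snd ` P = {}"
  proof -
    have "(a', b') \<notin> EP" if "((a, b), (a', b')) \<in> P" for a b a' b'
      using girth_5_path3_not_edge[OF girth_at_least_mono[OF girth] dis, of a' a b b']
        paths3_memD[OF bip that[unfolded P_def]]
      by (simp add: EP_def edge_pairs_def)
    then show ?thesis by force
  qed
  ultimately have "card EP + card P \<le> card (A \<times> B)"
    using EP_sub fin card_Un_disjoint[of EP "snd ` P"]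
    by (metis card_mono finite_subset Un_least)
  then show ?thesis using card_edge_pairs[OF bip] by (simp add: EP_def P_def card_cartesian_product)
qed

lemma convex_on_mul_ln_pred: "convex_on {2..} (\<lambda>t::real. t * ln (t - 1))"
proof (rule f''_ge0_imp_convex[where f' = "\<lambda>t. ln (t - 1) + t / (t - 1)"
      and f'' = "\<lambda>t. 1 / (t - 1) - 1 / (t - 1)^2"])
  fix x :: real assume "x \<in> {2..}"
  then have x: "x \<ge> 2" by simp
  show "((\<lambda>t. t * ln (t - 1)) has_real_derivative ln (x - 1) + x / (x - 1)) (at x)"
    using x by (auto intro!: derivative_eq_intros simp: field_simps)
  show "((\<lambda>t. ln (t - 1) + t / (t - 1)) has_real_derivative 1 / (x - 1) - 1 / (x - 1)^2) (at x)"
    using x by (auto intro!: derivative_eq_intros simp: field_simps power2_eq_square)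
  have "1 / (x - 1)^2 \<le> 1 / (x - 1)"
    using x by (intro divide_left_mono) (auto simp: power2_eq_square)
  then show "0 \<le> 1 / (x - 1) - 1 / (x - 1)^2" by simp
qed (rule convex_real_interval)

lemma sum_mul_ln_pred_ge:
  fixes f :: "'b \<Rightarrow> real"
  assumes "finite S" "S \<noteq> {}" "\<And>u. u \<in> S \<Longrightarrow> 2 \<le> f u"
  shows "sum f S * ln (sum f S / card S - 1) \<le> (\<Sum>u\<in>S. f u * ln (f u - 1))"
proof -
  define n where "n = real (card S)"
  have n: "n > 0" using assms(1,2) by (simp add: n_def card_gt_0_iff)
  have "(\<lambda>t. t * ln (t - 1)) (\<Sum>u\<in>S. (1 / n) *\<^sub>R f u) \<le> (\<Sum>u\<in>S. (1 / n) * (f u * ln (f u - 1)))"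
    by (rule convex_on_sum[OF assms(1,2) convex_on_mul_ln_pred]) (use assms n in \<open>auto simp: n_def\<close>)
  then have "n * (sum f S / n * ln (sum f S / n - 1)) \<le> n * ((1 / n) * (\<Sum>u\<in>S. f u * ln (f u - 1)))"
    using n by (simp add: sum_distrib_left[symmetric] sum_divide_distrib[symmetric] divide_inverse_commute)
  then show ?thesis using n by (simp add: n_def)
qed

lemma mult_one_plus_ln_div_le:
  fixes k z :: real
  assumes "0 < k" "0 < z"
  shows "k * (1 + ln (z / k)) \<le> z"
proof -
  have "ln (z / k) \<le> z / k - 1" using assms by (intro ln_le_minus_one) simp
  then have "k * (1 + ln (z / k)) \<le> k * (z / k)" using assms(1) by (intro mult_left_mono) auto
  then show ?thesis using assms(1) by simp
qed

lemma sum_mult_ge_tangent_ln: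
  fixes X Y :: "'b \<Rightarrow> real"
  assumes "\<And>p. p \<in> S \<Longrightarrow> 0 < X p" "\<And>p. p \<in> S \<Longrightarrow> 0 < Y p" "0 < c"
  shows "c^2 * (card S + (\<Sum>p\<in>S. ln (X p) + ln (Y p)) - 2 * card S * ln c) \<le> (\<Sum>p\<in>S. X p * Y p)"
proof -
  have "c^2 * (1 + ln (X p) + ln (Y p) - 2 * ln c) \<le> X p * Y p" if "p \<in> S" for p
  proof -
    have "0 < X p" "0 < Y p" using assms(1,2) that by auto
    then have ln_eq: "ln (X p * Y p / c^2) = ln (X p) + ln (Y p) - 2 * ln c"
      using assms(3) by (simp add: ln_div ln_mult ln_realpow)
    have "c^2 * (1 + ln (X p) + ln (Y p) - 2 * ln c) = c^2 * (1 + ln (X p * Y p / c^2))"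
      unfolding ln_eq by (simp add: algebra_simps)
    also have "\<dots> \<le> X p * Y p" using assms that by (intro mult_one_plus_ln_div_le) auto
    finally show ?thesis .
  qed
  then have "(\<Sum>p\<in>S. c^2 * (1 + ln (X p) + ln (Y p) - 2 * ln c)) \<le> (\<Sum>p\<in>S. X p * Y p)"
    by (rule sum_mono)
  then show ?thesis
    by (simp add: sum.distrib sum_subtractf sum_distrib_left algebra_simps)
qed

lemma sum_degree_weighted_eq_edge_pairs:
  assumes "bipartite_graph A B E"
  shows "(\<Sum>u\<in>A \<union> B. h u * real (degree E u)) =
           (\<Sum>p\<in>edge_pairs A B E. h (fst p) + h (snd p))"
  using assms sum_edge_pairs_fst[OF assms, of h] sum_edge_pairs_snd[OF assms, of h]
  by (simp add: sum.distrib sum.union_disjoint bipartite_graph_def mult.commute)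

lemma sum_degree_product_edge_pairs_ge:
  assumes bip: "bipartite_graph A B E" and "A \<union> B \<noteq> {}"
    and min_degree: "\<And>u. u \<in> A \<union> B \<Longrightarrow> 2 \<le> degree E u"
  defines "c \<equiv> 2 * real (card E) / real (card A + card B) - 1"
  shows "real (card E) * c^2 \<le>
           (\<Sum>(a, b)\<in>edge_pairs A B E. (real (degree E b) - 1) * (real (degree E a) - 1))"
proof -
  define EP where "EP = edge_pairs A B E"
  define e where "e = real (card E)"
  define lg where "lg u = ln (real (degree E u) - 1)" for u
  have fin: "finite (A \<union> B)" and card_AB: "card (A \<union> B) = card A + card B"
    using bip card_Un_disjoint by (auto simp: bipartite_graph_def)
  have sum_deg: "(\<Sum>u\<in>A \<union> B. real (degree E u)) = 2 * e"
    using sum_degree_weighted_eq_edge_pairs[OF bip, of "\<lambda>_. 1"] card_edge_pairs[OF bip]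
    by (simp add: e_def)
  have c_eq: "c = 2 * e / card (A \<union> B) - 1"
    by (simp add: c_def card_AB e_def)
  have "(\<Sum>u\<in>A \<union> B. 2) \<le> (\<Sum>u\<in>A \<union> B. real (degree E u))"
    using min_degree by (intro sum_mono) simp
  then have c: "1 \<le> c"
    using fin assms(2) unfolding c_eq sum_deg by (simp add: card_gt_0_iff field_simps)
  have "2 * e * ln c \<le> (\<Sum>u\<in>A \<union> B. real (degree E u) * lg u)"
    using sum_mul_ln_pred_ge[OF fin assms(2), of "\<lambda>u. real (degree E u)"] min_degree
    unfolding sum_deg by (simp add: lg_def c_eq)
  also have "\<dots> = (\<Sum>p\<in>EP. lg (snd p) + lg (fst p))"
    using sum_degree_weighted_eq_edge_pairs[OF bip, of lg] by (simp add: EP_def add.commute mult.commute)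
  finally have "c^2 * e \<le> c^2 * (e + (\<Sum>p\<in>EP. lg (snd p) + lg (fst p)) - 2 * e * ln c)"
    by (intro mult_left_mono) auto
  also have "\<dots> \<le> (\<Sum>p\<in>EP. (real (degree E (snd p)) - 1) * (real (degree E (fst p)) - 1))"
    using sum_mult_ge_tangent_ln[of EP "\<lambda>p. real (degree E (snd p)) - 1"
        "\<lambda>p. real (degree E (fst p)) - 1" c] min_degree c card_edge_pairs[OF bip]
    by (force simp: EP_def e_def lg_def edge_pairs_def)
  finally show ?thesis by (simp add: EP_def e_def mult.commute case_prod_beta)
qed

definition girth8_poly :: "real \<Rightarrow> real" where
  "girth8_poly d = d * (1 + (d - 1)^2)"

lemma girth8_poly_mono: "x \<le> y \<Longrightarrow> girth8_poly x \<le> girth8_poly y"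
proof -
  assume "x \<le> y"
  have "0 \<le> (x + y/2 - 1)^2 + 3/4 * (y - 2/3)^2 + 2/3" by (intro add_nonneg_nonneg) auto
  also have "\<dots> = x^2 + x*y + y^2 - 2*x - 2*y + 2" by (simp add: power2_eq_square algebra_simps)
  finally have "0 \<le> (y - x) * (x^2 + x*y + y^2 - 2*x - 2*y + 2)"
    using \<open>x \<le> y\<close> by simp
  also have "\<dots> = girth8_poly y - girth8_poly x"
    by (simp add: girth8_poly_def power2_eq_square algebra_simps)
  finally show ?thesis by simp
qed

lemma girth8_poly_two_minus_le: "0 < u \<Longrightarrow> girth8_poly (2 - u) \<le> 1 / u"
proof -
  assume "0 < u"
  have "u * girth8_poly (2 - u) = 1 - (1 - u)^4"
    by (simp add: girth8_poly_def power2_eq_square power4_eq_xxxx algebra_simps)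
  also have "\<dots> \<le> 1" by simp
  finally show ?thesis using \<open>0 < u\<close> by (simp add: pos_le_divide_eq mult.commute)
qed

lemma girth8_poly_average_degree_le_sparse:
  fixes e n :: nat
  assumes "0 < n" "e < n"
  shows "girth8_poly (2 * real e / real n) \<le> real n / 2"
proof -
  have "2 * real e / n \<le> 2 - 2 / n" using assms by (simp add: field_simps)
  then have "girth8_poly (2 * real e / n) \<le> girth8_poly (2 - 2 / n)"
    by (rule girth8_poly_mono)
  also have "\<dots> \<le> n / 2" using girth8_poly_two_minus_le[of "2 / n"] assms(1) by simp
  finally show ?thesis .
qed

lemma girth8_poly_average_degree_le_min_degree_2:
  assumes bip: "bipartite_graph A B E" and girth: "girth_at_least E 7" and "A \<union> B \<noteq> {}"
    and min_degree: "\<And>u. u \<in> A \<union> B \<Longrightarrow> 2 \<le> degree E u"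
  shows "girth8_poly (2 * real (card E) / real (card A + card B)) \<le> real (card A + card B) / 2"
proof -
  define e N where "e = real (card E)" and "N = real (card A + card B)"
  define c where "c = 2 * e / N - 1"
  have "0 < card (A \<union> B)" using assms(3) bip by (auto simp: bipartite_graph_def card_gt_0_iff)
  then have "0 < N" using card_Un_le[of A B] by (simp add: N_def)
  have "e + e * c^2 \<le> real (card A) * real (card B)"
    using card_edges_plus_paths3_le[OF bip girth] card_paths3[OF bip]
      sum_degree_product_edge_pairs_ge[OF bip assms(3) min_degree]
    unfolding of_nat_le_iff[symmetric, where 'a = real] by (simp add: e_def N_def c_def)
  also have "\<dots> \<le> N^2 / 4"
    using sum_squares_ge_zero[of "real (card A) - real (card B)" 0]
    by (simp add: N_def power2_eq_square algebra_simps)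
  finally have key: "e * (1 + c^2) \<le> N^2 / 4" by (simp add: algebra_simps)
  have "girth8_poly (2 * e / N) = 2 * (e * (1 + c^2)) / N"
    by (simp add: girth8_poly_def c_def)
  also have "\<dots> \<le> 2 * (N^2 / 4) / N"
    using key \<open>0 < N\<close> by (intro divide_right_mono) auto
  also have "\<dots> = N / 2"
    using \<open>0 < N\<close> by (simp add: power2_eq_square)
  finally show ?thesis by (simp add: e_def N_def)
qed

lemma bipartite_graph_delete_vertex:
  "bipartite_graph A B E \<Longrightarrow> bipartite_graph (A - {x}) (B - {x}) {ed \<in> E. x \<notin> ed}"
  unfolding bipartite_graph_def by blast

lemma card_edges_le_delete_vertex:
  assumes "bipartite_graph A B E"
  shows "card E \<le> card {ed \<in> E. x \<notin> ed} + degree E x"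
proof -
  have "E = {ed \<in> E. x \<notin> ed} \<union> {ed \<in> E. x \<in> ed}" by blast
  then have "card E \<le> card {ed \<in> E. x \<notin> ed} + card {ed \<in> E. x \<in> ed}"
    by (metis card_Un_le)
  moreover have "{ed \<in> E. x \<in> ed} \<subseteq> (\<lambda>w. {x, w}) ` neighbours E x"
  proof
    fix ed assume "ed \<in> {ed \<in> E. x \<in> ed}"
    then obtain a b where "ed \<in> E" "x \<in> ed" "ed = {a, b}"
      using assms by (auto elim: bipartite_graph_edgeE)
    then show "ed \<in> (\<lambda>w. {x, w}) ` neighbours E x"
      by (auto simp: neighbours_def insert_commute)
  qed
  then have "card {ed \<in> E. x \<in> ed} \<le> degree E x"
    unfolding degree_def using bipartite_graph_finite_neighbours[OF assms]
    by (meson card_image_le card_mono finite_imageI order_trans)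
  ultimately show ?thesis by linarith
qed

lemma bipartite_graph_card_delete_vertex:
  assumes "bipartite_graph A B E" "x \<in> A \<union> B"
  shows "card (A - {x}) + card (B - {x}) = card A + card B - 1"
proof (cases "x \<in> A")
  case True
  then have "x \<notin> B" "0 < card A" using assms(1) by (auto simp: bipartite_graph_def card_gt_0_iff)
  then show ?thesis using True by simp
next
  case False
  then have "x \<in> B" "0 < card B" using assms by (auto simp: bipartite_graph_def card_gt_0_iff)
  then show ?thesis using False by simp
qed

lemma divide_le_divide_delete_one:
  fixes e e' n :: real
  assumes "1 < n" "n \<le> e" "e \<le> e' + 1"
  shows "e / n \<le> e' / (n - 1)"
proof -
  have "e * (n - 1) \<le> (e - 1) * n" using assms(2) by (simp add: algebra_simps)
  also have "\<dots> \<le> e' * n" using assms by (intro mult_right_mono) auto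
  finally show ?thesis using assms(1) by (simp add: field_simps)
qed

lemma girth8_poly_average_degree_le:
  assumes "bipartite_graph A B E" "girth_at_least E 7" "0 < card A + card B"
  shows "girth8_poly (2 * real (card E) / real (card A + card B)) \<le> real (card A + card B) / 2"
  using assms
proof (induction "card A + card B" arbitrary: A B E rule: less_induct)
  case less
  note bip = less.prems(1) and girth = less.prems(2)
  define n where "n = card A + card B"
  have n: "0 < real n" using less.prems(3) by (simp only: n_def of_nat_0_less_iff)
  consider "card E < n" | "\<forall>u\<in>A \<union> B. 2 \<le> degree E u"
    | x where "x \<in> A \<union> B" "degree E x \<le> 1" "n \<le> card E"
    by (metis not_le One_nat_def Suc_1 less_Suc_eq_le)
  then show ?case
  proof cases
    case 1
    then show ?thesis
      using girth8_poly_average_degree_le_sparse[OF less.prems(3)] by (simp add: n_def)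
  next
    case 2
    then show ?thesis using less.prems
      by (intro girth8_poly_average_degree_le_min_degree_2) auto
  next
    case 3
    define A' B' E' where "A' = A - {x}" and "B' = B - {x}" and "E' = {ed \<in> E. x \<notin> ed}"
    have bip': "bipartite_graph A' B' E'"
      unfolding A'_def B'_def E'_def by (rule bipartite_graph_delete_vertex[OF bip])
    have girth': "girth_at_least E' 7"
      by (rule girth_at_least_subset[OF girth]) (auto simp: E'_def)
    have "card E \<le> card E' + 1"
      using card_edges_le_delete_vertex[OF bip, of x] 3 by (simp add: E'_def)
    have "E \<noteq> {}" using 3 n by auto
    then obtain a b where "a \<in> A" "b \<in> B" using bip by (blast elim: bipartite_graph_edgeE)
    then have "0 < card A" "0 < card B" using bip by (auto simp: bipartite_graph_def card_gt_0_iff)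
    then have "2 \<le> n" by (simp add: n_def)
    have "card A' + card B' = n - 1"
      using bipartite_graph_card_delete_vertex[OF bip \<open>x \<in> A \<union> B\<close>] by (simp add: A'_def B'_def n_def)
    then have IH: "girth8_poly (2 * real (card E') / (real n - 1)) \<le> (real n - 1) / 2"
      using less.hyps[OF _ bip' girth'] \<open>2 \<le> n\<close> by (simp add: n_def of_nat_diff)
    have "real (card E) / n \<le> real (card E') / (real n - 1)"
      using \<open>2 \<le> n\<close> 3 \<open>card E \<le> card E' + 1\<close> by (intro divide_le_divide_delete_one) auto
    then have "girth8_poly (2 * real (card E) / n) \<le> girth8_poly (2 * real (card E') / (real n - 1))"
      by (intro girth8_poly_mono) (simp add: mult_divide_mult_cancel_left_if)
    also have "\<dots> \<le> n / 2" using IH by simp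
    finally show ?thesis by (simp add: n_def)
  qed
qed

lemma girth8_poly_gt_cube:
  fixes x :: real
  assumes "1 \<le> x"
  shows "x^3 < girth8_poly ((x^4 + 2/3 * x^3 - 2/9 * x^2 - 20/81 * x) / x^3)"
proof -
  define Y k where "Y = 81*x^3 + 54*x^2 - 18*x - 20" and "k = 81*x^2"
  have "k > 0" using assms by (simp add: k_def)
  have arg: "(x^4 + 2/3 * x^3 - 2/9 * x^2 - 20/81 * x) / x^3 = Y / k"
    using assms by (simp add: Y_def k_def field_simps power2_eq_square power3_eq_cube power4_eq_xxxx)
  have "girth8_poly (Y / k) = (Y^3 - 2*Y^2*k + 2*Y*k^2) / k^3"
    using \<open>k > 0\<close> by (simp add: girth8_poly_def field_simps power2_eq_square power3_eq_cube)
  then have "girth8_poly (Y / k) - x^3 = (Y^3 - 2*Y^2*k + 2*Y*k^2 - x^3 * k^3) / k^3"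
    using \<open>k > 0\<close> by (simp add: diff_divide_distrib)
  also have "\<dots> = (87480*x^4 + 91368*x^3 - 19440*x^2 - 21600*x - 8000) / k^3"
    unfolding Y_def k_def by algebra
  also have "\<dots> > 0"
  proof -
    have "x^2 \<le> x^4" "x \<le> x^4" "1 \<le> x^4" "0 \<le> x^3"
      using assms power_increasing[of 2 4 x] power_increasing[of 1 4 x] by simp_all
    then have "0 < 87480*x^4 + 91368*x^3 - 19440*x^2 - 21600*x - 8000" by linarith
    then show ?thesis using \<open>k > 0\<close> by simp
  qed
  finally show ?thesis unfolding arg by simp
qed

theorem corollary4p9:
  fixes A B :: "'a set" and E :: "'a set set" and v :: nat
  assumes "bipartite_graph A B E"
    and "card A = v" and "card B = v"
    and "v \<ge> 1"
    and "girth_at_least E 8"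
  shows "real (card E) < real v powr (4/3) + 2/3 * real v - 2/9 * real v powr (2/3)
                          - 20/81 * real v powr (1/3)"
proof -
  define x where "x = real v powr (1/3)"
  define bound where "bound = x^4 + 2/3 * x^3 - 2/9 * x^2 - 20/81 * x"
  have "1 \<le> x" using assms(4) by (simp add: x_def ge_one_powr_ge_zero)
  have x_pow: "real v powr (n / 3) = x ^ n" for n :: nat
    using assms(4) by (simp add: x_def powr_realpow[symmetric] powr_powr)
  have v: "real v = x^3" using x_pow[of 3] assms(4) by simp
  have "girth8_poly (real (card E) / x^3) \<le> x^3"
    using girth8_poly_average_degree_le[OF assms(1) girth_at_least_mono[OF assms(5)]] assms(2-4)
    by (simp add: v)
  then have "\<not> bound / x^3 \<le> real (card E) / x^3"
    using girth8_poly_gt_cube[OF \<open>1 \<le> x\<close>] girth8_poly_mono unfolding bound_def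
    by (meson not_le order_trans)
  moreover have "0 < x^3" using \<open>1 \<le> x\<close> by simp
  ultimately have "real (card E) < bound" by (simp add: not_le divide_less_cancel)
  moreover have "real v powr (4/3) = x^4" "real v powr (2/3) = x^2" "real v powr (1/3) = x"
    using x_pow[of 4] x_pow[of 2] x_pow[of 1] by simp_all
  ultimately show ?thesis by (simp add: bound_def v)
qed

end
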